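(* For any American type option, the equal risk price with commitment $p^*_c$ is smaller than or equal to the equal risk price without commitment $p^*_{nc}$ (assuming both exist).
   Context: Discrete-time setting: filtered probability space $(\Omega,\mathcal{F},(\mathcal{F}_t),\mathbb{P})$, zero interest rate, risky asset with $S_k:=S_{t_k}$, trading dates $t_0<\dots<t_{K-1}<t_K=T$, $\Delta S_{k+1}=S_{k+1}-S_k$, adapted auxiliary process $Y_k$. An exercise time is a stopping time $\tau:\Omega\to\{0,\dots,K\}$ with $\{\tau=k\}\in\mathcal{F}_{t_k}$; the payoff is $F(S_\tau,Y_\tau)=\sum_{k=0}^K\mathbf{1}\{\tau=k\}F_k(S_k,Y_k)$. The set $\bar{\mathcal{X}}_\tau(p_0)$ consists of wealth processes defined for every exercise time $\tau$ by $X^\tau_0=p_0$ and $X^\tau_{k+1}(\tau)=X^\tau_k(\tau)+(\xi_k\mathbf{1}\{\tau>k\}+\sum_{i=0}^k\hat\xi^i_k\mathbf{1}\{\tau=i\})\Delta S_{k+1}$, where $\xi_k,\hat\xi^i_k$ are $\mathcal{F}_{t_k}$-measurable (not depending on $\tau$). Risk measures $\rho^w,\rho^b$ (on random costs) are certainty equivalents ($\rho(c)=c$ for $c\in\mathbb{R}$), monotone, and strictly monotone with respect to certain amounts. Define $\varrho^w(p_0,\tau)=\inf_{X^\tau\in\bar{\mathcal{X}}_\tau(p_0)}\rho^w(F(S_\tau,Y_\tau)-X^\tau_K(\tau))$, $\varrho^b(p_0,\tau)=\inf_{X^\tau\in\bar{\mathcal{X}}_\tau(-p_0)}\rho^b(-F(S_\tau,Y_\tau)-X^\tau_K(\tau))$,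 $\varrho^w_\tau(p_0)=\inf_{X^\tau\in\bar{\mathcal{X}}_\tau(p_0)}\sup_\tau\rho^w(F(S_\tau,Y_\tau)-X^\tau_K(\tau))$ and $\varrho^b_\tau(p_0)=\inf_{X^\tau\in\bar{\mathcal{X}}_\tau(-p_0)}\inf_\tau\rho^b(-F(S_\tau,Y_\tau)-X^\tau_K(\tau))$. The ERP with commitment is the unique $p_0^*$ for which some $\tau^*$ satisfies $\varrho^w(p_0^*,\tau^* )=\varrho^b(p_0^*,\tau^* )\in\mathbb{R}$ and $\tau^*\in\arg\min_\tau\varrho^b(p_0^*,\tau)$. The ERP without commitment is the unique $p_0^*$ with $\varrho^w_\tau(p_0^* )=\varrho^b_\tau(p_0^* )\in\mathbb{R}$. *)

theory Defs
  imports "HOL-Probability.Probability"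
begin

text \<open>Discrete-time market. Time index k = 0..K stands for trading date t_k.
  Fk k is the sigma-algebra F_{t_k}; S k = S_{t_k}; Y k = Y_{t_k}.\<close>

definition dfiltration :: "'w measure \<Rightarrow> nat \<Rightarrow> (nat \<Rightarrow> 'w measure) \<Rightarrow> bool" where
  "dfiltration M K Fk \<longleftrightarrow>
     (\<forall>k\<le>K. space (Fk k) = space M \<and> sets (Fk k) \<subseteq> sets M) \<and>
     (\<forall>k l. k \<le> l \<and> l \<le> K \<longrightarrow> sets (Fk k) \<subseteq> sets (Fk l))"

definition exercise_time :: "'w measure \<Rightarrow> nat \<Rightarrow> (nat \<Rightarrow> 'w measure) \<Rightarrow> ('w \<Rightarrow> nat) \<Rightarrow> bool" where
  "exercise_time M K Fk \<tau> \<longleftrightarrow>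
     (\<forall>\<omega>\<in>space M. \<tau> \<omega> \<le> K) \<and> (\<forall>k\<le>K. {\<omega>\<in>space M. \<tau> \<omega> = k} \<in> sets (Fk k))"

definition exercise_times :: "'w measure \<Rightarrow> nat \<Rightarrow> (nat \<Rightarrow> 'w measure) \<Rightarrow> ('w \<Rightarrow> nat) set" where
  "exercise_times M K Fk = {\<tau>. exercise_time M K Fk \<tau>}"

text \<open>Trading strategies (xi_k, hat-xi^i_k), with hat-xi^i_k = xih i k; both
  F_{t_k}-measurable and independent of the exercise time.\<close>
definition strategies :: "nat \<Rightarrow> (nat \<Rightarrow> 'w measure) \<Rightarrow>
    ((nat \<Rightarrow> 'w \<Rightarrow> real) \<times> (nat \<Rightarrow> nat \<Rightarrow> 'w \<Rightarrow> real)) set" where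
  "strategies K Fk = {(\<xi>, \<xi>h). \<forall>k<K. \<xi> k \<in> borel_measurable (Fk k) \<and>
                         (\<forall>i\<le>k. \<xi>h i k \<in> borel_measurable (Fk k))}"

fun wealth :: "(nat \<Rightarrow> 'w \<Rightarrow> real) \<Rightarrow> (nat \<Rightarrow> 'w \<Rightarrow> real) \<Rightarrow> (nat \<Rightarrow> nat \<Rightarrow> 'w \<Rightarrow> real)
    \<Rightarrow> real \<Rightarrow> ('w \<Rightarrow> nat) \<Rightarrow> nat \<Rightarrow> 'w \<Rightarrow> real" where
  "wealth S \<xi> \<xi>h p0 \<tau> 0 \<omega> = p0"
| "wealth S \<xi> \<xi>h p0 \<tau> (Suc k) \<omega> = wealth S \<xi> \<xi>h p0 \<tau> k \<omega> +
     (\<xi> k \<omega> * (if \<tau> \<omega> > k then 1 else 0) +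
      (\<Sum>i\<le>k. \<xi>h i k \<omega> * (if \<tau> \<omega> = i then 1 else 0))) * (S (Suc k) \<omega> - S k \<omega>)"

definition payoff :: "nat \<Rightarrow> (nat \<Rightarrow> real \<Rightarrow> 'y \<Rightarrow> real) \<Rightarrow> (nat \<Rightarrow> 'w \<Rightarrow> real)
    \<Rightarrow> (nat \<Rightarrow> 'w \<Rightarrow> 'y) \<Rightarrow> ('w \<Rightarrow> nat) \<Rightarrow> 'w \<Rightarrow> real" where
  "payoff K F S Y \<tau> \<omega> = (\<Sum>k\<le>K. (if \<tau> \<omega> = k then 1 else 0) * F k (S k \<omega>) (Y k \<omega>))"

definition certainty_equivalent :: "'w measure \<Rightarrow> (('w \<Rightarrow> real) \<Rightarrow> ereal) \<Rightarrow> bool" where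
  "certainty_equivalent M \<rho> \<longleftrightarrow> (\<forall>c::real. \<rho> (\<lambda>_. c) = ereal c)"

definition monotone_rm :: "'w measure \<Rightarrow> (('w \<Rightarrow> real) \<Rightarrow> ereal) \<Rightarrow> bool" where
  "monotone_rm M \<rho> \<longleftrightarrow> (\<forall>X Z. (\<forall>\<omega>\<in>space M. X \<omega> \<le> Z \<omega>) \<longrightarrow> \<rho> X \<le> \<rho> Z)"

definition strictly_monotone_certain :: "'w measure \<Rightarrow> (('w \<Rightarrow> real) \<Rightarrow> ereal) \<Rightarrow> bool" where
  "strictly_monotone_certain M \<rho> \<longleftrightarrow>
     (\<forall>X (c::real). c > 0 \<and> \<bar>\<rho> X\<bar> \<noteq> \<infinity> \<longrightarrow> \<rho> X < \<rho> (\<lambda>\<omega>. X \<omega> + c))"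

definition risk_measure :: "'w measure \<Rightarrow> (('w \<Rightarrow> real) \<Rightarrow> ereal) \<Rightarrow> bool" where
  "risk_measure M \<rho> \<longleftrightarrow> certainty_equivalent M \<rho> \<and> monotone_rm M \<rho> \<and> strictly_monotone_certain M \<rho>"

definition writer_risk :: "nat \<Rightarrow> (nat \<Rightarrow> 'w measure) \<Rightarrow> (('w \<Rightarrow> real) \<Rightarrow> ereal)
    \<Rightarrow> (nat \<Rightarrow> real \<Rightarrow> 'y \<Rightarrow> real) \<Rightarrow> (nat \<Rightarrow> 'w \<Rightarrow> real) \<Rightarrow> (nat \<Rightarrow> 'w \<Rightarrow> 'y)
    \<Rightarrow> real \<Rightarrow> ('w \<Rightarrow> nat) \<Rightarrow> ereal" where
  "writer_risk K Fk \<rho>w F S Y p0 \<tau> =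
     (INF st\<in>strategies K Fk. \<rho>w (\<lambda>\<omega>. payoff K F S Y \<tau> \<omega> - wealth S (fst st) (snd st) p0 \<tau> K \<omega>))"

definition buyer_risk :: "nat \<Rightarrow> (nat \<Rightarrow> 'w measure) \<Rightarrow> (('w \<Rightarrow> real) \<Rightarrow> ereal)
    \<Rightarrow> (nat \<Rightarrow> real \<Rightarrow> 'y \<Rightarrow> real) \<Rightarrow> (nat \<Rightarrow> 'w \<Rightarrow> real) \<Rightarrow> (nat \<Rightarrow> 'w \<Rightarrow> 'y)
    \<Rightarrow> real \<Rightarrow> ('w \<Rightarrow> nat) \<Rightarrow> ereal" where
  "buyer_risk K Fk \<rho>b F S Y p0 \<tau> =
     (INF st\<in>strategies K Fk. \<rho>b (\<lambda>\<omega>. - payoff K F S Y \<tau> \<omega> - wealth S (fst st) (snd st) (- p0) \<tau> K \<omega>))"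

definition writer_risk_nc :: "'w measure \<Rightarrow> nat \<Rightarrow> (nat \<Rightarrow> 'w measure) \<Rightarrow> (('w \<Rightarrow> real) \<Rightarrow> ereal)
    \<Rightarrow> (nat \<Rightarrow> real \<Rightarrow> 'y \<Rightarrow> real) \<Rightarrow> (nat \<Rightarrow> 'w \<Rightarrow> real) \<Rightarrow> (nat \<Rightarrow> 'w \<Rightarrow> 'y)
    \<Rightarrow> real \<Rightarrow> ereal" where
  "writer_risk_nc M K Fk \<rho>w F S Y p0 =
     (INF st\<in>strategies K Fk. SUP \<tau>\<in>exercise_times M K Fk.
        \<rho>w (\<lambda>\<omega>. payoff K F S Y \<tau> \<omega> - wealth S (fst st) (snd st) p0 \<tau> K \<omega>))"

definition buyer_risk_nc :: "'w measure \<Rightarrow> nat \<Rightarrow> (nat \<Rightarrow> 'w measure) \<Rightarrow> (('w \<Rightarrow> real) \<Rightarrow> ereal)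
    \<Rightarrow> (nat \<Rightarrow> real \<Rightarrow> 'y \<Rightarrow> real) \<Rightarrow> (nat \<Rightarrow> 'w \<Rightarrow> real) \<Rightarrow> (nat \<Rightarrow> 'w \<Rightarrow> 'y)
    \<Rightarrow> real \<Rightarrow> ereal" where
  "buyer_risk_nc M K Fk \<rho>b F S Y p0 =
     (INF st\<in>strategies K Fk. INF \<tau>\<in>exercise_times M K Fk.
        \<rho>b (\<lambda>\<omega>. - payoff K F S Y \<tau> \<omega> - wealth S (fst st) (snd st) (- p0) \<tau> K \<omega>))"

definition erp_c_prop :: "'w measure \<Rightarrow> nat \<Rightarrow> (nat \<Rightarrow> 'w measure) \<Rightarrow> (('w \<Rightarrow> real) \<Rightarrow> ereal)
    \<Rightarrow> (('w \<Rightarrow> real) \<Rightarrow> ereal) \<Rightarrow> (nat \<Rightarrow> real \<Rightarrow> 'y \<Rightarrow> real) \<Rightarrow> (nat \<Rightarrow> 'w \<Rightarrow> real)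
    \<Rightarrow> (nat \<Rightarrow> 'w \<Rightarrow> 'y) \<Rightarrow> real \<Rightarrow> bool" where
  "erp_c_prop M K Fk \<rho>w \<rho>b F S Y p0 \<longleftrightarrow>
     (\<exists>\<tau>s\<in>exercise_times M K Fk.
        writer_risk K Fk \<rho>w F S Y p0 \<tau>s = buyer_risk K Fk \<rho>b F S Y p0 \<tau>s \<and>
        \<bar>writer_risk K Fk \<rho>w F S Y p0 \<tau>s\<bar> \<noteq> \<infinity> \<and>
        (\<forall>\<tau>\<in>exercise_times M K Fk. buyer_risk K Fk \<rho>b F S Y p0 \<tau>s \<le> buyer_risk K Fk \<rho>b F S Y p0 \<tau>))"

definition is_erp_c where
  "is_erp_c M K Fk \<rho>w \<rho>b F S Y p0 \<longleftrightarrow>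
     erp_c_prop M K Fk \<rho>w \<rho>b F S Y p0 \<and> (\<forall>q. erp_c_prop M K Fk \<rho>w \<rho>b F S Y q \<longrightarrow> q = p0)"

definition erp_nc_prop where
  "erp_nc_prop M K Fk \<rho>w \<rho>b F S Y p0 \<longleftrightarrow>
     writer_risk_nc M K Fk \<rho>w F S Y p0 = buyer_risk_nc M K Fk \<rho>b F S Y p0 \<and>
     \<bar>writer_risk_nc M K Fk \<rho>w F S Y p0\<bar> \<noteq> \<infinity>"

definition is_erp_nc where
  "is_erp_nc M K Fk \<rho>w \<rho>b F S Y p0 \<longleftrightarrow>
     erp_nc_prop M K Fk \<rho>w \<rho>b F S Y p0 \<and> (\<forall>q. erp_nc_prop M K Fk \<rho>w \<rho>b F S Y q \<longrightarrow> q = p0)"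

end

theory Submission
  imports Defs
begin

text \<open>Both no-commitment risks are monotone in the price: the writer's decreases and the buyer's
  increases. At the price with commitment the buyer's no-commitment risk is at most the writer's,
  since the committed exercise time is one admissible choice for both infima. If the price without
  commitment were strictly smaller, the two monotone risks would be squeezed together at the price
  with commitment, making it a second price without commitment, against uniqueness.\<close>

lemma wealth_mono_initial:
  "p \<le> q \<Longrightarrow> wealth S \<xi> \<xi>h p \<tau> k \<omega> \<le> wealth S \<xi> \<xi>h q \<tau> k \<omega>"
  by (induction k) auto

lemma monotone_rmD:
  assumes "monotone_rm M \<rho>" and "\<And>\<omega>. X \<omega> \<le> Z \<omega>"
  shows "\<rho> X \<le> \<rho> Z"
  using assms unfolding monotone_rm_def by blast

lemma writer_risk_nc_antimono:
  assumes "monotone_rm M \<rho>w" and "p \<le> q"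
  shows "writer_risk_nc M K Fk \<rho>w F S Y q \<le> writer_risk_nc M K Fk \<rho>w F S Y p"
proof -
  have "\<rho>w (\<lambda>\<omega>. payoff K F S Y \<tau> \<omega> - wealth S \<xi> \<xi>h q \<tau> K \<omega>)
      \<le> \<rho>w (\<lambda>\<omega>. payoff K F S Y \<tau> \<omega> - wealth S \<xi> \<xi>h p \<tau> K \<omega>)" for \<xi> \<xi>h \<tau>
    using assms by (intro monotone_rmD[of M] diff_left_mono wealth_mono_initial)
  then show ?thesis
    unfolding writer_risk_nc_def by (intro INF_mono' SUP_mono')
qed

lemma buyer_risk_nc_mono:
  assumes "monotone_rm M \<rho>b" and "p \<le> q"
  shows "buyer_risk_nc M K Fk \<rho>b F S Y p \<le> buyer_risk_nc M K Fk \<rho>b F S Y q"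
proof -
  have "\<rho>b (\<lambda>\<omega>. - payoff K F S Y \<tau> \<omega> - wealth S \<xi> \<xi>h (- p) \<tau> K \<omega>)
      \<le> \<rho>b (\<lambda>\<omega>. - payoff K F S Y \<tau> \<omega> - wealth S \<xi> \<xi>h (- q) \<tau> K \<omega>)" for \<xi> \<xi>h \<tau>
    using assms by (intro monotone_rmD[of M] diff_left_mono wealth_mono_initial) simp_all
  then show ?thesis
    unfolding buyer_risk_nc_def by (intro INF_mono')
qed

lemma buyer_risk_nc_le_buyer_risk:
  assumes "\<tau> \<in> exercise_times M K Fk"
  shows "buyer_risk_nc M K Fk \<rho>b F S Y p \<le> buyer_risk K Fk \<rho>b F S Y p \<tau>"
  unfolding buyer_risk_nc_def buyer_risk_def
  using assms by (intro INF_mono') (rule INF_lower)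

lemma writer_risk_le_writer_risk_nc:
  assumes "\<tau> \<in> exercise_times M K Fk"
  shows "writer_risk K Fk \<rho>w F S Y p \<tau> \<le> writer_risk_nc M K Fk \<rho>w F S Y p"
  unfolding writer_risk_nc_def writer_risk_def
  using assms by (intro INF_mono') (rule SUP_upper)

lemma erp_c_prop_imp_buyer_risk_nc_le_writer_risk_nc:
  assumes "erp_c_prop M K Fk \<rho>w \<rho>b F S Y p"
  shows "buyer_risk_nc M K Fk \<rho>b F S Y p \<le> writer_risk_nc M K Fk \<rho>w F S Y p"
proof -
  from assms obtain \<tau> where \<tau>: "\<tau> \<in> exercise_times M K Fk"
    and eq: "writer_risk K Fk \<rho>w F S Y p \<tau> = buyer_risk K Fk \<rho>b F S Y p \<tau>"
    unfolding erp_c_prop_def by blast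
  have "buyer_risk_nc M K Fk \<rho>b F S Y p \<le> buyer_risk K Fk \<rho>b F S Y p \<tau>"
    using \<tau> by (rule buyer_risk_nc_le_buyer_risk)
  also have "\<dots> = writer_risk K Fk \<rho>w F S Y p \<tau>"
    using eq by simp
  also have "\<dots> \<le> writer_risk_nc M K Fk \<rho>w F S Y p"
    using \<tau> by (rule writer_risk_le_writer_risk_nc)
  finally show ?thesis .
qed

lemma erp_nc_prop_at_higher_price:
  assumes "monotone_rm M \<rho>w" and "monotone_rm M \<rho>b"
    and "erp_nc_prop M K Fk \<rho>w \<rho>b F S Y p" and "p \<le> q"
    and "buyer_risk_nc M K Fk \<rho>b F S Y q \<le> writer_risk_nc M K Fk \<rho>w F S Y q"
  shows "erp_nc_prop M K Fk \<rho>w \<rho>b F S Y q"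
proof -
  let ?w = "writer_risk_nc M K Fk \<rho>w F S Y" and ?b = "buyer_risk_nc M K Fk \<rho>b F S Y"
  have "?w q \<le> ?w p"
    using assms(1,4) by (rule writer_risk_nc_antimono)
  moreover have "?w p = ?b p" and finite: "\<bar>?w p\<bar> \<noteq> \<infinity>"
    using assms(3) unfolding erp_nc_prop_def by auto
  moreover have "?b p \<le> ?b q"
    using assms(2,4) by (rule buyer_risk_nc_mono)
  ultimately have "?w q = ?w p" and "?b q = ?w p"
    using assms(5) by auto
  with finite show ?thesis
    unfolding erp_nc_prop_def by simp
qed

theorem lemma2:
  fixes M :: "'w measure" and K :: nat and Fk :: "nat \<Rightarrow> 'w measure"
    and S :: "nat \<Rightarrow> 'w \<Rightarrow> real" and Y :: "nat \<Rightarrow> 'w \<Rightarrow> 'y" and YM :: "'y measure"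
    and F :: "nat \<Rightarrow> real \<Rightarrow> 'y \<Rightarrow> real"
    and \<rho>w \<rho>b :: "('w \<Rightarrow> real) \<Rightarrow> ereal"
    and pc pnc :: real
  assumes "prob_space M"
    and "dfiltration M K Fk"
    and "\<And>k. k \<le> K \<Longrightarrow> S k \<in> borel_measurable (Fk k)"
    and "\<And>k. k \<le> K \<Longrightarrow> Y k \<in> measurable (Fk k) YM"
    and "risk_measure M \<rho>w" and "risk_measure M \<rho>b"
    and "is_erp_c M K Fk \<rho>w \<rho>b F S Y pc"
    and "is_erp_nc M K Fk \<rho>w \<rho>b F S Y pnc"
  shows "pc \<le> pnc"
proof (cases "pc \<le> pnc")
  case False
  have mono: "monotone_rm M \<rho>w" "monotone_rm M \<rho>b"
    using assms(5,6) unfolding risk_measure_def by auto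
  have erp_nc: "erp_nc_prop M K Fk \<rho>w \<rho>b F S Y pnc"
    using assms(8) unfolding is_erp_nc_def by blast
  have risks_at_pc: "buyer_risk_nc M K Fk \<rho>b F S Y pc \<le> writer_risk_nc M K Fk \<rho>w F S Y pc"
    using assms(7) unfolding is_erp_c_def
    by (blast intro: erp_c_prop_imp_buyer_risk_nc_le_writer_risk_nc)
  have "erp_nc_prop M K Fk \<rho>w \<rho>b F S Y pc"
    using erp_nc_prop_at_higher_price[OF mono erp_nc _ risks_at_pc] False by simp
  then have "pc = pnc"
    using assms(8) unfolding is_erp_nc_def by blast
  then show ?thesis by simp
qed

end
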